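(* Let $y\in[0,1]$, $z\in(0,1]$, and $U=H^{(z)}_{12}H^{(y)}_{23}$. Then $$\sup_{\sigma}\ \mathrm{Tr}\big[U(\sigma\otimes|0\rangle\langle0|)U^\dagger\,\big((\mathbb 1-|0\rangle\langle0|)\otimes|0\rangle\langle0|\otimes|0\rangle\langle0|\big)\big]=1-(1-y)(1-z),$$ where the supremum is over all density operators $\sigma$ on the two-mode Fock space (modes $1,2$), and it is attained by the state $$|\phi\rangle=\sqrt{\tfrac{z}{1-(1-y)(1-z)}}\,|10\rangle+\sqrt{\tfrac{y(1-z)}{1-(1-y)(1-z)}}\,|01\rangle.$$ In particular, for $y=1-\frac1{2(1-x)}$, $z=2x$ with $x\in(0,\tfrac12]$, the supremum equals $\frac1{2(1-x)}$.
   Context: Bosonic modes $1,2,3$ with creation operators $\hat a_k^\dagger$ and Fock states $|n\rangle$; in tensor products the factors are modes $1,2,3$ in order, and $\sigma\otimes|0\rangle\langle0|$ means mode $3$ is in the vacuum. For $r\in[0,1]$, $H^{(r)}_{kl}$ is the passive linear-optical unitary fixing the vacuum with $\hat a_k^\dagger\mapsto\sqrt r\,\hat a_k^\dagger+\sqrt{1-r}\,\hat a_l^\dagger$, $\hat a_l^\dagger\mapsto\sqrt{1-r}\,\hat a_k^\dagger-\sqrt r\,\hat a_l^\dagger$. $U=H^{(z)}_{12}H^{(y)}_{23}$ means first $H^{(y)}$ on modes $2,3$, then $H^{(z)}$ on modes $1,2$. The projector $(\mathbb 1-|0\rangle\langle0|)\otimes|00\rangle\langle00|$ corresponds to ideal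 threshold (click/no-click) detectors registering a click on mode $1$ and no click on modes $2,3$. *)

theory Defs
  imports "HOL-Analysis.Analysis"
begin

text \<open>Fock basis of three bosonic modes: occupation triples (n1,n2,n3).
  Modes 1,2,3 are indexed 0,1,2 in matrices.\<close>

type_synonym occ3 = "nat \<times> nat \<times> nat"

definition occ :: "occ3 \<Rightarrow> nat \<Rightarrow> nat" where
  "occ m k = (case m of (a, b, c) \<Rightarrow> if k = 0 then a else if k = 1 then b else c)"

definition tot :: "occ3 \<Rightarrow> nat" where
  "tot m = (case m of (a, b, c) \<Rightarrow> a + b + c)"

text \<open>Mode-transformation matrix of a passive linear-optical unitary:
  it maps a_k^dagger to sum_j M j k a_j^dagger (j,k < 3).
  Matrix of H^(r)_{kl}.\<close>

definition Hmat :: "real \<Rightarrow> nat \<Rightarrow> nat \<Rightarrow> nat \<Rightarrow> nat \<Rightarrow> real" where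
  "Hmat r k l j i =
     (if i = k then (if j = k then sqrt r else if j = l then sqrt (1 - r) else 0)
      else if i = l then (if j = k then sqrt (1 - r) else if j = l then - sqrt r else 0)
      else (if j = i then 1 else 0))"

definition expmats :: "occ3 \<Rightarrow> occ3 \<Rightarrow> (nat \<Rightarrow> nat \<Rightarrow> nat) set" where
  "expmats m n = {c. (\<forall>j k. (3 \<le> j \<or> 3 \<le> k) \<longrightarrow> c j k = 0)
                    \<and> (\<forall>k<3. (\<Sum>j<3. c j k) = occ n k)
                    \<and> (\<forall>j<3. (\<Sum>k<3. c j k) = occ m j)}"

text \<open>Fock-basis matrix element <m| U_M |n> of the passive linear-optical unitary
  with mode matrix M, obtained by expanding
  U_M |n> = prod_k (sum_j M j k a_j^dagger)^(n_k) / sqrt(n_k!) |0>.\<close>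

definition amp :: "(nat \<Rightarrow> nat \<Rightarrow> real) \<Rightarrow> occ3 \<Rightarrow> occ3 \<Rightarrow> real" where
  "amp M m n =
     sqrt (\<Prod>j<3. fact (occ m j)) * sqrt (\<Prod>k<3. fact (occ n k)) *
     (\<Sum>c\<in>expmats m n. \<Prod>j<3. \<Prod>k<3. M j k ^ c j k / fact (c j k))"

text \<open>Action of U_M on a vector of the three-mode Fock space (coefficient function).
  U_M preserves total photon number, so the sum is finite.\<close>

definition lo_apply :: "(nat \<Rightarrow> nat \<Rightarrow> real) \<Rightarrow> (occ3 \<Rightarrow> complex) \<Rightarrow> occ3 \<Rightarrow> complex" where
  "lo_apply M \<Psi> m = (\<Sum>n\<in>{n. tot n = tot m}. complex_of_real (amp M m n) * \<Psi> n)"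

definition U_op :: "real \<Rightarrow> real \<Rightarrow> (occ3 \<Rightarrow> complex) \<Rightarrow> occ3 \<Rightarrow> complex" where
  "U_op y z \<Psi> = lo_apply (Hmat z 0 1) (lo_apply (Hmat y 1 2) \<Psi>)"

definition embed_vac3 :: "(nat \<times> nat \<Rightarrow> complex) \<Rightarrow> occ3 \<Rightarrow> complex" where
  "embed_vac3 \<psi> m = (case m of (a, b, c) \<Rightarrow> if c = 0 then \<psi> (a, b) else 0)"

definition click_proj :: "(occ3 \<Rightarrow> complex) \<Rightarrow> occ3 \<Rightarrow> complex" where
  "click_proj \<Phi> m = (case m of (a, b, c) \<Rightarrow> if a \<noteq> 0 \<and> b = 0 \<and> c = 0 then \<Phi> m else 0)"

definition inner3 :: "(occ3 \<Rightarrow> complex) \<Rightarrow> (occ3 \<Rightarrow> complex) \<Rightarrow> complex" where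
  "inner3 \<Phi> \<Xi> = infsum (\<lambda>m. cnj (\<Phi> m) * \<Xi> m) UNIV"

definition unit_vec2 :: "(nat \<times> nat \<Rightarrow> complex) \<Rightarrow> bool" where
  "unit_vec2 \<psi> \<longleftrightarrow> ((\<lambda>k. (cmod (\<psi> k))\<^sup>2) has_sum 1) UNIV"

text \<open>A density operator sigma on the two-mode Fock space, represented as
  sigma = sum_i p_i |psi_i><psi_i| (countable convex combination of pure states).\<close>

definition is_density :: "(nat \<Rightarrow> real) \<Rightarrow> (nat \<Rightarrow> nat \<times> nat \<Rightarrow> complex) \<Rightarrow> bool" where
  "is_density p \<psi> \<longleftrightarrow> (\<forall>i. 0 \<le> p i) \<and> (p has_sum 1) UNIV \<and> (\<forall>i. unit_vec2 (\<psi> i))"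

text \<open>Tr[U (sigma tensor |0><0|) U^dagger P] = sum_i p_i <U(psi_i,0)| P |U(psi_i,0)>.\<close>

definition click_prob :: "real \<Rightarrow> real \<Rightarrow> (nat \<Rightarrow> real) \<Rightarrow> (nat \<Rightarrow> nat \<times> nat \<Rightarrow> complex) \<Rightarrow> complex" where
  "click_prob y z p \<psi> =
     infsum (\<lambda>i. complex_of_real (p i) *
        inner3 (U_op y z (embed_vac3 (\<psi> i))) (click_proj (U_op y z (embed_vac3 (\<psi> i))))) UNIV"

definition phi_state :: "real \<Rightarrow> real \<Rightarrow> nat \<times> nat \<Rightarrow> complex" where
  "phi_state y z k =
     (if k = (1, 0) then complex_of_real (sqrt (z / (1 - (1 - y) * (1 - z))))
      else if k = (0, 1) then complex_of_real (sqrt (y * (1 - z) / (1 - (1 - y) * (1 - z))))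
      else 0)"

end

theory Submission
  imports Defs
begin

text \<open>
  The transformation U conserves photon number and mode 3 starts empty, so the only counted outcomes
  are |a,0,0\<rangle> with a \<ge> 1, whose amplitude is a linear combination of the input amplitudes
  \<psi>(n1, a - n1) of total photon number a. By the binomial theorem the squared coefficients
  sum to s^a, where s = 1 - (1 - y)(1 - z); Cauchy-Schwarz then bounds the click probability of
  a pure state by the sum over a \<ge> 1 of s^a times the weight of \<psi> in photon number a,
  hence by s. The single-photon state \<phi>, parallel to the coefficient vector for a = 1,
  attains the bound, and a mixed state is a convex combination of pure ones.
\<close>

lemma lessThan_3: "{..<3::nat} = {0, 1, 2}"
  by auto

lemma sum_lessThan_3: "(\<Sum>k<(3::nat). f k) = f 0 + f 1 + f 2"
  by (simp add: lessThan_3 ac_simps)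

lemma prod_lessThan_3: "(\<Prod>k<(3::nat). f k) = f 0 * f 1 * f 2"
  by (simp add: lessThan_3 ac_simps)

lemma occ_simps [simp]:
  "occ (a,b,c) 0 = a" "occ (a,b,c) 1 = b" "occ (a,b,c) 2 = c"
  "occ (a,b,c) (Suc 0) = b" "occ (a,b,c) (Suc (Suc 0)) = c"
  by (auto simp: occ_def)

lemma finite_tot_eq: "finite {n::occ3. tot n = t}"
  by (rule finite_subset[of _ "{..t} \<times> {..t} \<times> {..t}"]) (auto simp: tot_def)

lemma finite_expmats: "finite (expmats m n)"
proof -
  define rows where
    "rows = {r::nat \<Rightarrow> nat. \<forall>k. (k \<in> {..<3} \<longrightarrow> r k \<in> {..tot n}) \<and> (k \<notin> {..<3} \<longrightarrow> r k = 0)}"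
  have "finite rows"
    unfolding rows_def by (intro finite_set_of_finite_funs) auto
  then have fin: "finite {c. \<forall>j. (j \<in> {..<3::nat} \<longrightarrow> c j \<in> rows) \<and> (j \<notin> {..<3} \<longrightarrow> c j = (\<lambda>_. 0))}"
    by (intro finite_set_of_finite_funs) auto
  have bound: "c j k \<le> tot n" if "c \<in> expmats m n" "k < 3" for c j k
  proof (cases "j < 3")
    case True
    then have "c j k \<le> (\<Sum>j<3. c j k)" by (intro member_le_sum) auto
    also have "\<dots> = occ n k" using that unfolding expmats_def by auto
    also have "\<dots> \<le> tot n" using that(2) by (cases n) (auto simp: occ_def tot_def)
    finally show ?thesis .
  qed (use that in \<open>auto simp: expmats_def\<close>)
  have "expmats m n \<subseteq> {c. \<forall>j. (j \<in> {..<3} \<longrightarrow> c j \<in> rows) \<and> (j \<notin> {..<3} \<longrightarrow> c j = (\<lambda>_. 0))}"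
    using bound unfolding rows_def by (auto simp: expmats_def not_less)
  then show ?thesis using fin by (rule finite_subset)
qed

lemma sum_eq_single_support:
  assumes "finite E" "\<And>c. c \<in> E \<Longrightarrow> c \<noteq> c0 \<Longrightarrow> f c = 0"
  shows "sum f E = (if c0 \<in> E then f c0 else 0)"
  using assms by (auto intro: sum.neutral simp: sum.remove)

lemma expmats_first_row:
  assumes "n1 + n2 + n3 = a"
  shows "expmats (a,0,0) (n1,n2,n3) = {\<lambda>j k. if j = 0 \<and> k < 3 then occ (n1,n2,n3) k else 0}"
proof (intro equalityI subsetI)
  fix c assume c: "c \<in> expmats (a,0,0) (n1,n2,n3)"
  have out: "\<And>j k. 3 \<le> j \<or> 3 \<le> k \<Longrightarrow> c j k = 0"
    and cols: "\<And>k. k < 3 \<Longrightarrow> c 0 k + c 1 k + c 2 k = occ (n1,n2,n3) k"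
    and rows: "c 1 0 + c 1 1 + c 1 2 = 0" "c 2 0 + c 2 1 + c 2 2 = 0"
    using c unfolding expmats_def sum_lessThan_3 by (auto dest: spec[of _ 1] spec[of _ 2])
  then have "c j k = (if j = 0 \<and> k < 3 then occ (n1,n2,n3) k else 0)" for j k
  proof (cases "j < 3 \<and> k < 3")
    case True
    then have "j \<in> {0, 1, 2}" "k \<in> {0, 1, 2}" by auto
    with cols[of k] rows True show ?thesis by auto
  qed (use out in auto)
  then show "c \<in> {\<lambda>j k. if j = 0 \<and> k < 3 then occ (n1,n2,n3) k else 0}" by auto
qed (use assms in \<open>auto simp: expmats_def sum_lessThan_3 occ_def\<close>)

lemma fact_eq_binomial_mult:
  "n1 + n2 = a \<Longrightarrow> (fact a :: real) = real (a choose n1) * (fact n1 * fact n2)"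
proof -
  assume "n1 + n2 = a"
  then have "fact n1 * fact n2 * (a choose n1) = fact a"
    using binomial_fact_lemma[of n1 a] by auto
  then have "real (fact n1 * fact n2 * (a choose n1)) = real (fact a)" by (rule arg_cong)
  then show ?thesis by (simp only: of_nat_mult of_nat_fact ac_simps)
qed

lemma amp_Hmat01_first_mode:
  assumes "n1 + n2 + n3 = a"
  shows "amp (Hmat z 0 1) (a,0,0) (n1,n2,n3) =
    (if n3 = 0 then sqrt (real (a choose n1)) * sqrt z ^ n1 * sqrt (1 - z) ^ n2 else 0)"
proof -
  define F :: real where "F = fact n1 * fact n2"
  have "amp (Hmat z 0 1) (a,0,0) (n1,n2,n3) =
     sqrt (fact a) * sqrt (fact n1 * fact n2 * fact n3) *
     (sqrt z ^ n1 / fact n1 * (sqrt (1 - z) ^ n2 / fact n2) * (0 ^ n3 / fact n3))"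
    unfolding amp_def expmats_first_row[OF assms] by (simp add: prod_lessThan_3 Hmat_def)
  moreover have "sqrt (fact a) * sqrt F * (sqrt z ^ n1 * sqrt (1 - z) ^ n2 / F) =
      sqrt (real (a choose n1)) * sqrt z ^ n1 * sqrt (1 - z) ^ n2" if "n3 = 0"
  proof -
    have "F > 0" by (simp add: F_def)
    moreover have "sqrt (fact a) = sqrt (real (a choose n1)) * sqrt F"
      using fact_eq_binomial_mult[of n1 n2 a] assms that by (simp add: F_def real_sqrt_mult)
    ultimately show ?thesis by (simp add: field_simps)
  qed
  ultimately show ?thesis
    by (cases "n3 = 0") (simp_all add: F_def)
qed

lemma amp_Hmat12_vac3:
  assumes "m1 + m2 = n1 + n2"
  shows "amp (Hmat y 1 2) (n1,n2,0) (m1,m2,0) = (if m1 = n1 then sqrt y ^ n2 else 0)"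
proof -
  define c0 :: "nat \<Rightarrow> nat \<Rightarrow> nat" where
    "c0 = (\<lambda>j k. if j = 0 \<and> k = 0 then n1 else if j = 1 \<and> k = 1 then n2 else 0)"
  define T where "T = (\<lambda>c. \<Prod>j<3. \<Prod>k<3. Hmat y 1 2 j k ^ c j k / fact (c j k))"
  have T_zero: "T c = 0" if c: "c \<in> expmats (n1,n2,0) (m1,m2,0)" "c \<noteq> c0" for c
  proof -
    have out: "\<And>j k. 3 \<le> j \<or> 3 \<le> k \<Longrightarrow> c j k = 0"
      and sums: "c 0 2 + c 1 2 + c 2 2 = 0"
        "c 0 0 + c 0 1 + c 0 2 = n1" "c 1 0 + c 1 1 + c 1 2 = n2" "c 2 0 + c 2 1 + c 2 2 = 0"
      using c(1) unfolding expmats_def sum_lessThan_3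
      by (auto dest: spec[of _ 0] spec[of _ 1] spec[of _ 2])
    have "c j k = c0 j k" if "c 0 1 = 0" "c 1 0 = 0" for j k
    proof (cases "j < 3 \<and> k < 3")
      case True
      then have "j \<in> {0, 1, 2}" "k \<in> {0, 1, 2}" by auto
      with that sums show ?thesis unfolding c0_def by auto
    qed (use out in \<open>auto simp: c0_def\<close>)
    \<comment> \<open>so c moves a photon between modes 1 and 2, where Hmat y 1 2 has zero entries\<close>
    then have "c 0 1 \<noteq> 0 \<or> c 1 0 \<noteq> 0" using c(2) by blast
    then show ?thesis unfolding T_def by (auto simp: prod_lessThan_3 Hmat_def)
  qed
  have c0_mem: "c0 \<in> expmats (n1,n2,0) (m1,m2,0) \<longleftrightarrow> m1 = n1"
    using assms unfolding expmats_def sum_lessThan_3 c0_def by (auto simp: occ_def)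
  have "amp (Hmat y 1 2) (n1,n2,0) (m1,m2,0) =
      sqrt (fact n1 * fact n2) * sqrt (fact m1 * fact m2) * sum T (expmats (n1,n2,0) (m1,m2,0))"
    unfolding amp_def T_def by (simp add: prod_lessThan_3)
  also have "sum T (expmats (n1,n2,0) (m1,m2,0)) = (if m1 = n1 then T c0 else 0)"
    unfolding c0_mem[symmetric] by (rule sum_eq_single_support[OF finite_expmats T_zero])
  also have "T c0 = sqrt y ^ n2 / (fact n1 * fact n2)"
    unfolding T_def c0_def by (simp add: prod_lessThan_3 Hmat_def)
  finally show ?thesis
    using assms by (auto simp flip: real_sqrt_mult)
qed

lemma lo_apply_Hmat12_embed_vac3:
  "lo_apply (Hmat y 1 2) (embed_vac3 \<psi>) (n1,n2,0) = of_real (sqrt y ^ n2) * \<psi> (n1,n2)"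
proof -
  let ?f = "\<lambda>n. complex_of_real (amp (Hmat y 1 2) (n1,n2,0) n) * embed_vac3 \<psi> n"
  have "sum ?f {n. tot n = tot (n1,n2,0)} = ?f (n1,n2,0)"
  proof (subst sum_eq_single_support[OF finite_tot_eq])
    fix n :: occ3 assume n: "n \<in> {n. tot n = tot (n1,n2,0)}" "n \<noteq> (n1,n2,0)"
    obtain m1 m2 m3 where n_eq: "n = (m1,m2,m3)" by (cases n)
    show "?f n = 0"
    proof (cases "m3 = 0")
      case True
      with n n_eq have "m1 + m2 = n1 + n2" "m1 \<noteq> n1" by (auto simp: tot_def)
      then show ?thesis using True n_eq amp_Hmat12_vac3[of m1 m2 n1 n2 y] by simp
    qed (simp add: n_eq embed_vac3_def)
  qed (simp add: tot_def)
  then show ?thesis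
    unfolding lo_apply_def using amp_Hmat12_vac3[of n1 n2 n1 n2 y] by (simp add: embed_vac3_def)
qed

text \<open>Each mode-2 photon must pass H^(y) (amplitude \<surd>y) and every photon must leave H^(z)
  through mode 1.\<close>

definition click_amp :: "real \<Rightarrow> real \<Rightarrow> nat \<Rightarrow> nat \<Rightarrow> real" where
  "click_amp y z a n1 = sqrt (real (a choose n1)) * sqrt z ^ n1 * (sqrt (1 - z) * sqrt y) ^ (a - n1)"

lemma U_op_embed_vac3_first_mode:
  "U_op y z (embed_vac3 \<psi>) (a,0,0) = (\<Sum>n1\<le>a. of_real (click_amp y z a n1) * \<psi> (n1, a - n1))"
proof -
  define F where
    "F = (\<lambda>n. of_real (amp (Hmat z 0 1) (a,0,0) n) * lo_apply (Hmat y 1 2) (embed_vac3 \<psi>) n)"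
  define g where "g = (\<lambda>n1::nat. (n1, a - n1, 0::nat))"
  have "U_op y z (embed_vac3 \<psi>) (a,0,0) = sum F {n. tot n = a}"
    unfolding U_op_def lo_apply_def F_def by (simp add: tot_def)
  also have "\<dots> = sum F (g ` {..a})"
  proof (rule sum.mono_neutral_right[OF finite_tot_eq])
    show "g ` {..a} \<subseteq> {n. tot n = a}" by (auto simp: g_def tot_def)
    show "\<forall>n\<in>{n. tot n = a} - g ` {..a}. F n = 0"
    proof
      fix n assume n: "n \<in> {n. tot n = a} - g ` {..a}"
      obtain m1 m2 m3 where n_eq: "n = (m1,m2,m3)" by (cases n)
      have "m3 \<noteq> 0"
      proof
        assume "m3 = 0"
        then have "n = g m1" "m1 \<le> a" using n n_eq by (auto simp: g_def tot_def)
        then show False using n by auto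
      qed
      then show "F n = 0"
        using n n_eq amp_Hmat01_first_mode[of m1 m2 m3 a z] by (simp add: F_def tot_def)
    qed
  qed
  also have "\<dots> = sum (F \<circ> g) {..a}"
    by (rule sum.reindex) (auto simp: g_def inj_on_def)
  also have "\<dots> = (\<Sum>n1\<le>a. of_real (click_amp y z a n1) * \<psi> (n1, a - n1))"
  proof (rule sum.cong)
    fix n1 assume "n1 \<in> {..a}"
    then show "(F \<circ> g) n1 = of_real (click_amp y z a n1) * \<psi> (n1, a - n1)"
      using amp_Hmat01_first_mode[of n1 "a - n1" 0 a z] lo_apply_Hmat12_embed_vac3[of y \<psi> n1 "a - n1"]
      by (simp add: F_def g_def click_amp_def power_mult_distrib)
  qed simp
  finally show ?thesis .
qed

lemma click_amp_sq:
  assumes "0 \<le> y" "0 \<le> z" "z \<le> 1"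
  shows "(click_amp y z a n1)\<^sup>2 = real (a choose n1) * z ^ n1 * ((1 - z) * y) ^ (a - n1)"
proof -
  have sqrt_pow_sq: "(sqrt t ^ k)\<^sup>2 = t ^ k" if "0 \<le> t" for t :: real and k :: nat
    using that by (simp flip: power_mult add: mult.commute[of k 2] power_mult)
  show ?thesis
    using assms by (simp add: click_amp_def power_mult_distrib sqrt_pow_sq)
qed

lemma sum_click_amp_sq:
  assumes "0 \<le> y" "0 \<le> z" "z \<le> 1"
  shows "(\<Sum>n1\<le>a. (click_amp y z a n1)\<^sup>2) = (1 - (1 - y) * (1 - z)) ^ a"
proof -
  have "(\<Sum>n1\<le>a. (click_amp y z a n1)\<^sup>2) =
      (\<Sum>n1\<le>a. real (a choose n1) * z ^ n1 * ((1 - z) * y) ^ (a - n1))"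
    using click_amp_sq[OF assms] by simp
  also have "\<dots> = (z + (1 - z) * y) ^ a" by (rule binomial_ring[symmetric])
  also have "z + (1 - z) * y = 1 - (1 - y) * (1 - z)" by (simp add: algebra_simps)
  finally show ?thesis .
qed

lemma norm_U_op_first_mode_sq_le:
  assumes "0 \<le> y" "0 \<le> z" "z \<le> 1"
  shows "(cmod (U_op y z (embed_vac3 \<psi>) (a,0,0)))\<^sup>2 \<le>
           (1 - (1 - y) * (1 - z)) ^ a * (\<Sum>n1\<le>a. (cmod (\<psi> (n1, a - n1)))\<^sup>2)"
proof -
  have "cmod (U_op y z (embed_vac3 \<psi>) (a,0,0)) \<le> (\<Sum>n1\<le>a. \<bar>click_amp y z a n1\<bar> * cmod (\<psi> (n1, a - n1)))"
    unfolding U_op_embed_vac3_first_mode by (rule order_trans[OF norm_sum]) (simp add: norm_mult)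
  then have "(cmod (U_op y z (embed_vac3 \<psi>) (a,0,0)))\<^sup>2 \<le>
      (\<Sum>n1\<le>a. \<bar>click_amp y z a n1\<bar> * cmod (\<psi> (n1, a - n1)))\<^sup>2"
    by (intro power_mono) auto
  also have "\<dots> \<le> (\<Sum>n1\<le>a. \<bar>click_amp y z a n1\<bar>\<^sup>2) * (\<Sum>n1\<le>a. (cmod (\<psi> (n1, a - n1)))\<^sup>2)"
    by (rule Cauchy_Schwarz_ineq_sum)
  also have "(\<Sum>n1\<le>a. \<bar>click_amp y z a n1\<bar>\<^sup>2) = (1 - (1 - y) * (1 - z)) ^ a"
    using sum_click_amp_sq[OF assms] by simp
  finally show ?thesis .
qed

lemma sum_antidiagonals_le_1:
  assumes "unit_vec2 \<psi>" "finite G"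
  shows "(\<Sum>a\<in>G. \<Sum>n1\<le>a. (cmod (\<psi> (n1, a - n1)))\<^sup>2) \<le> 1"
proof -
  define e where "e = (\<lambda>(a::nat, n1::nat). (n1, a - n1))"
  have inj: "inj_on e (Sigma G (\<lambda>a. {..a}))"
    by (auto simp: e_def inj_on_def)
  have "(\<Sum>a\<in>G. \<Sum>n1\<le>a. (cmod (\<psi> (n1, a - n1)))\<^sup>2) = (\<Sum>q\<in>Sigma G (\<lambda>a. {..a}). (cmod (\<psi> (e q)))\<^sup>2)"
    by (subst sum.Sigma) (auto simp: e_def assms(2) split_def)
  also have "\<dots> = (\<Sum>q\<in>e ` Sigma G (\<lambda>a. {..a}). (cmod (\<psi> q))\<^sup>2)"
    by (subst sum.reindex[OF inj]) auto
  also have "\<dots> \<le> 1"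
    using assms unfolding unit_vec2_def
    by (intro finite_sum_le_has_sum[where A=UNIV]) auto
  finally show ?thesis .
qed

lemma sum_norm_U_op_first_mode_sq_le:
  assumes "0 \<le> y" "y \<le> 1" "0 \<le> z" "z \<le> 1" "unit_vec2 \<psi>" "finite G" "0 \<notin> G"
  shows "(\<Sum>a\<in>G. (cmod (U_op y z (embed_vac3 \<psi>) (a,0,0)))\<^sup>2) \<le> 1 - (1 - y) * (1 - z)"
proof -
  define s where "s = 1 - (1 - y) * (1 - z)"
  have s0: "0 \<le> s" and s1: "s \<le> 1"
    unfolding s_def using assms by (auto simp: mult_le_one)
  define N where "N = (\<lambda>a. \<Sum>n1\<le>a. (cmod (\<psi> (n1, a - n1)))\<^sup>2)"
  have N0: "0 \<le> N a" for a unfolding N_def by (auto intro: sum_nonneg)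
  have "(\<Sum>a\<in>G. (cmod (U_op y z (embed_vac3 \<psi>) (a,0,0)))\<^sup>2) \<le> (\<Sum>a\<in>G. s * N a)"
  proof (rule sum_mono)
    fix a assume "a \<in> G"
    then have "s ^ a \<le> s ^ 1" using assms(7) s0 s1 by (intro power_decreasing) (auto simp: Suc_le_eq intro: Nat.gr0I)
    then have "s ^ a * N a \<le> s * N a" using N0[of a] by (intro mult_right_mono) auto
    then show "(cmod (U_op y z (embed_vac3 \<psi>) (a,0,0)))\<^sup>2 \<le> s * N a"
      using norm_U_op_first_mode_sq_le[of y z \<psi> a] assms unfolding s_def N_def by auto
  qed
  also have "\<dots> = s * (\<Sum>a\<in>G. N a)" by (simp add: sum_distrib_left)
  also have "\<dots> \<le> s"
    using sum_antidiagonals_le_1[OF assms(5,6)] s0 unfolding N_def by (simp add: mult_left_le)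
  finally show ?thesis unfolding s_def .
qed

definition click_density :: "(occ3 \<Rightarrow> complex) \<Rightarrow> occ3 \<Rightarrow> real" where
  "click_density \<Phi> m = (if fst m \<noteq> 0 \<and> snd m = (0,0) then (cmod (\<Phi> m))\<^sup>2 else 0)"

lemma infsum_complex_of_real:
  "infsum (\<lambda>x. complex_of_real (f x)) A = complex_of_real (infsum f A)"
proof (rule infsum_bounded_linear_strong[OF _ bounded_linear_of_real])
  show "(\<lambda>x. complex_of_real (f x)) summable_on A \<longleftrightarrow> f summable_on A"
    using summable_on_Re[of "\<lambda>x. complex_of_real (f x)" A] summable_on_of_real[of f A] by auto
qed

lemma inner3_click_proj: "inner3 \<Phi> (click_proj \<Phi>) = of_real (infsum (click_density \<Phi>) UNIV)"
  unfolding inner3_def infsum_complex_of_real[symmetric]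
  by (rule infsum_cong)
     (auto simp: click_proj_def click_density_def mult.commute[of "cnj _"]
           simp flip: complex_norm_square split: prod.splits)

lemma click_prob_eq:
  "click_prob y z p \<psi> =
    of_real (infsum (\<lambda>i. p i * infsum (click_density (U_op y z (embed_vac3 (\<psi> i)))) UNIV) UNIV)"
  unfolding click_prob_def inner3_click_proj of_real_mult[symmetric] infsum_complex_of_real ..

lemma sum_click_density_le:
  assumes "0 \<le> y" "y \<le> 1" "0 \<le> z" "z \<le> 1" "unit_vec2 \<psi>" "finite F"
  shows "sum (click_density (U_op y z (embed_vac3 \<psi>))) F \<le> 1 - (1 - y) * (1 - z)"
proof -
  let ?h = "click_density (U_op y z (embed_vac3 \<psi>))"
  define A where "A = {m\<in>F. fst m \<noteq> 0 \<and> snd m = (0,0)}"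
  have inj: "inj_on fst A" unfolding A_def by (auto simp: inj_on_def prod_eq_iff)
  have "sum ?h F = sum ?h A"
    unfolding A_def by (rule sum.mono_neutral_right) (auto simp: assms(6) click_density_def)
  also have "\<dots> = (\<Sum>a\<in>fst ` A. (cmod (U_op y z (embed_vac3 \<psi>) (a,0,0)))\<^sup>2)"
    by (subst sum.reindex[OF inj]) (auto simp: A_def click_density_def intro!: sum.cong)
  also have "\<dots> \<le> 1 - (1 - y) * (1 - z)"
    using assms by (intro sum_norm_U_op_first_mode_sq_le) (auto simp: A_def)
  finally show ?thesis .
qed

lemma infsum_click_density_le:
  assumes "0 \<le> y" "y \<le> 1" "0 \<le> z" "z \<le> 1" "unit_vec2 \<psi>"
  shows "infsum (click_density (U_op y z (embed_vac3 \<psi>))) UNIV \<le> 1 - (1 - y) * (1 - z)"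
proof (rule infsum_le_finite_sums)
  show "click_density (U_op y z (embed_vac3 \<psi>)) summable_on UNIV"
    using sum_click_density_le[OF assms]
    by (intro nonneg_bdd_above_summable_on bdd_aboveI) (auto simp: click_density_def)
qed (use sum_click_density_le[OF assms] in auto)

lemma infsum_prob_weighted_le:
  fixes p Q :: "'a \<Rightarrow> real"
  assumes "\<And>i. 0 \<le> p i" "(p has_sum 1) UNIV" "\<And>i. Q i \<le> s" "0 \<le> s"
  shows "infsum (\<lambda>i. p i * Q i) UNIV \<le> s"
proof (cases "(\<lambda>i. p i * Q i) summable_on UNIV")
  case True
  have ps: "((\<lambda>i. p i * s) has_sum s) UNIV"
    using has_sum_cmult_left[OF assms(2), of s] by simp
  have "infsum (\<lambda>i. p i * Q i) UNIV \<le> infsum (\<lambda>i. p i * s) UNIV"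
    using True ps assms(1,3) by (intro infsum_mono) (auto intro: mult_left_mono simp: summable_on_def)
  also have "\<dots> = s" using ps by (rule infsumI)
  finally show ?thesis .
qed (simp add: infsum_not_exists assms(4))

lemma click_prob_le:
  assumes "0 \<le> y" "y \<le> 1" "0 \<le> z" "z \<le> 1" "is_density p \<psi>"
  shows "Re (click_prob y z p \<psi>) \<le> 1 - (1 - y) * (1 - z)"
  unfolding click_prob_eq Re_complex_of_real
proof (rule infsum_prob_weighted_le)
  show "0 \<le> 1 - (1 - y) * (1 - z)" using assms(1-4) by (simp add: mult_le_one)
qed (use assms(5) infsum_click_density_le[OF assms(1-4)] in \<open>auto simp: is_density_def\<close>)

lemma click_bound_pos:
  fixes y z :: real
  assumes "0 \<le> y" "y \<le> 1" "0 < z" "z \<le> 1"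
  shows "0 < 1 - (1 - y) * (1 - z)"
proof -
  have "(1 - y) * (1 - z) \<le> 1 - z" using assms by (intro mult_left_le_one_le) auto
  then show ?thesis using assms(3) by linarith
qed

lemma U_op_phi_state_first_mode:
  assumes "0 \<le> y" "y \<le> 1" "0 < z" "z \<le> 1"
  shows "U_op y z (embed_vac3 (phi_state y z)) (a,0,0) =
    (if a = 1 then of_real (sqrt (1 - (1 - y) * (1 - z))) else 0)"
proof (cases "a = 1")
  case True
  define s where "s = 1 - (1 - y) * (1 - z)"
  have s: "0 < s" unfolding s_def using assms by (rule click_bound_pos)
  have "click_amp y z 1 0 * sqrt (y * (1 - z) / s) + click_amp y z 1 1 * sqrt (z / s) =
      (y * (1 - z) + z) / sqrt s"
    using assms s
    by (simp add: click_amp_def real_sqrt_divide real_sqrt_mult add_divide_distrib)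
       (simp add: mult_ac flip: real_sqrt_mult)
  also have "\<dots> = sqrt s"
    using s by (simp add: s_def algebra_simps real_div_sqrt)
  finally show ?thesis
    using True unfolding U_op_embed_vac3_first_mode
    by (simp add: phi_state_def s_def flip: of_real_mult of_real_add)
qed (auto simp: U_op_embed_vac3_first_mode phi_state_def intro!: sum.neutral)

lemma infsum_click_density_phi_state:
  assumes "0 \<le> y" "y \<le> 1" "0 < z" "z \<le> 1"
  shows "infsum (click_density (U_op y z (embed_vac3 (phi_state y z)))) UNIV = 1 - (1 - y) * (1 - z)"
proof (rule infsumI, rule has_sum_finite_neutralI)
  show "\<And>m. m \<in> UNIV - {(1,0,0)} \<Longrightarrow> click_density (U_op y z (embed_vac3 (phi_state y z))) m = 0"
    by (auto simp: click_density_def U_op_phi_state_first_mode[OF assms] prod_eq_iff)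
  show "1 - (1 - y) * (1 - z) = (\<Sum>m\<in>{(1,0,0)}. click_density (U_op y z (embed_vac3 (phi_state y z))) m)"
    using click_bound_pos[OF assms] by (simp add: click_density_def U_op_phi_state_first_mode[OF assms])
qed auto

lemma is_density_phi_state:
  assumes "0 \<le> y" "y \<le> 1" "0 < z" "z \<le> 1"
  shows "is_density (\<lambda>i. if i = 0 then 1 else 0) (\<lambda>_. phi_state y z)"
proof -
  define s where "s = 1 - (1 - y) * (1 - z)"
  have s: "0 < s" unfolding s_def using assms by (rule click_bound_pos)
  have "((\<lambda>i::nat. if i = 0 then 1 else 0::real) has_sum 1) UNIV"
    by (rule has_sum_finite_neutralI[of "{0}"]) auto
  moreover have "((\<lambda>k. (cmod (phi_state y z k))\<^sup>2) has_sum 1) UNIV"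
  proof (rule has_sum_finite_neutralI[of "{(1,0), (0,1)}"])
    have "z + y * (1 - z) = s" by (simp add: s_def algebra_simps)
    then have "z / s + y * (1 - z) / s = 1"
      using s by (simp flip: add_divide_distrib)
    then show "1 = (\<Sum>k\<in>{(1,0), (0,1)}. (cmod (phi_state y z k))\<^sup>2)"
      using assms s by (simp add: phi_state_def s_def)
  qed (auto simp: phi_state_def)
  ultimately show ?thesis by (simp add: is_density_def unit_vec2_def)
qed

lemma click_prob_phi_state:
  assumes "0 \<le> y" "y \<le> 1" "0 < z" "z \<le> 1"
  shows "click_prob y z (\<lambda>i. if i = 0 then 1 else 0) (\<lambda>_. phi_state y z) =
    of_real (1 - (1 - y) * (1 - z))"
proof -
  have "((\<lambda>i::nat. (if i = 0 then 1 else 0) * (1 - (1 - y) * (1 - z))) has_sum (1 - (1 - y) * (1 - z))) UNIV"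
    by (rule has_sum_finite_neutralI[of "{0}"]) auto
  then show ?thesis
    unfolding click_prob_eq infsum_click_density_phi_state[OF assms] by (simp add: infsumI)
qed

lemma Sup_click_prob:
  assumes "0 \<le> y" "y \<le> 1" "0 < z" "z \<le> 1"
  shows "Sup {Re (click_prob y z p \<psi>) | p \<psi>. is_density p \<psi>} = 1 - (1 - y) * (1 - z)"
proof (rule cSup_eq_maximum)
  show "1 - (1 - y) * (1 - z) \<in> {Re (click_prob y z p \<psi>) | p \<psi>. is_density p \<psi>}"
    using is_density_phi_state[OF assms] click_prob_phi_state[OF assms] by force
qed (use click_prob_le assms in auto)

theorem mainTheorem3:
  fixes y z :: real
  assumes "0 \<le> y" "y \<le> 1" "0 < z" "z \<le> 1"
  shows "(\<forall>p \<psi>. is_density p \<psi> \<longrightarrow> click_prob y z p \<psi> \<in> \<real>)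
    \<and> Sup {Re (click_prob y z p \<psi>) | p \<psi>. is_density p \<psi>} = 1 - (1 - y) * (1 - z)
    \<and> is_density (\<lambda>i. if i = 0 then 1 else 0) (\<lambda>_. phi_state y z)
    \<and> click_prob y z (\<lambda>i. if i = 0 then 1 else 0) (\<lambda>_. phi_state y z)
        = complex_of_real (1 - (1 - y) * (1 - z))
    \<and> (\<forall>x::real. 0 < x \<and> x \<le> 1/2 \<longrightarrow>
         Sup {Re (click_prob (1 - 1 / (2 * (1 - x))) (2 * x) p \<psi>) | p \<psi>. is_density p \<psi>}
           = 1 / (2 * (1 - x)))"
proof (intro conjI allI impI)
  show "click_prob y z p \<psi> \<in> \<real>" for p \<psi>
    unfolding click_prob_eq by simp
next
  fix x :: real assume x: "0 < x \<and> x \<le> 1/2"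
  then have "Sup {Re (click_prob (1 - 1 / (2 * (1 - x))) (2 * x) p \<psi>) | p \<psi>. is_density p \<psi>}
      = 1 - (1 - (1 - 1 / (2 * (1 - x)))) * (1 - 2 * x)"
    by (intro Sup_click_prob) (auto simp: field_simps)
  also have "\<dots> = 1 / (2 * (1 - x))" using x by (simp add: field_simps)
  finally show "Sup {Re (click_prob (1 - 1 / (2 * (1 - x))) (2 * x) p \<psi>) | p \<psi>. is_density p \<psi>}
      = 1 / (2 * (1 - x))" .
qed (simp_all only: Sup_click_prob[OF assms] is_density_phi_state[OF assms]
    click_prob_phi_state[OF assms])

end
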